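(* Let $\alpha,\beta,\mu$ be real parameters with $0<\alpha\leq 1$, $\beta>0$, $0<\mu\leq 1$. For an arbitrary initial point $(x^{(0)},y^{(0)})\in\mathbb{R}^2_+$ define recursively, for $n\geq 1$, $$x^{(n)}=\beta y^{(n-1)}-\frac{\alpha x^{(n-1)}}{1+x^{(n-1)}}+x^{(n-1)},\qquad y^{(n)}=\frac{\alpha x^{(n-1)}}{1+x^{(n-1)}}-\mu y^{(n-1)}+y^{(n-1)}.$$ Then for all $n\geq 0$: $$0\leq y^{(n)}\leq y^{(0)}\ \text{ if } y^{(0)}>\frac{\alpha}{\mu},\qquad 0\leq y^{(n)}\leq \frac{\alpha}{\mu}\ \text{ if } y^{(0)}<\frac{\alpha}{\mu}.$$
   Context: $\mathbb{R}^2_+=\{(x,y)\in\mathbb{R}^2: x\geq 0,\ y\geq 0\}$. Under the stated parameter conditions the map $(x,y)\mapsto\left(\beta y-\frac{\alpha x}{1+x}+x,\ \frac{\alpha x}{1+x}-\mu y+y\right)$ maps $\mathbb{R}^2_+$ into itself, so all $x^{(n)},y^{(n)}$ are nonnegative. *)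

theory Defs
  imports Complex_Main
begin

definition step_map :: "real \<Rightarrow> real \<Rightarrow> real \<Rightarrow> real \<times> real \<Rightarrow> real \<times> real" where
  "step_map \<alpha> \<beta> \<mu> p = (let x = fst p; y = snd p in
     (\<beta> * y - \<alpha> * x / (1 + x) + x, \<alpha> * x / (1 + x) - \<mu> * y + y))"

primrec orbit :: "real \<Rightarrow> real \<Rightarrow> real \<Rightarrow> real \<Rightarrow> real \<Rightarrow> nat \<Rightarrow> real \<times> real" where
  "orbit \<alpha> \<beta> \<mu> x0 y0 0 = (x0, y0)"
| "orbit \<alpha> \<beta> \<mu> x0 y0 (Suc n) = step_map \<alpha> \<beta> \<mu> (orbit \<alpha> \<beta> \<mu> x0 y0 n)"

end

theory Submission
  imports Defs
begin

text \<open>The new \<open>y\<close> is \<open>(1 - \<mu>) y + \<alpha> x / (1 + x)\<close>, whose second term is at most \<open>\<alpha>\<close>,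
  so \<open>y \<le> M\<close> persists as soon as \<open>\<alpha> \<le> \<mu> M\<close>; the new \<open>x\<close> is at least
  \<open>x - \<alpha> x / (1 + x) \<ge> 0\<close> because \<open>\<alpha> \<le> 1\<close>. Hence the strip \<open>[0, \<infinity>) \<times> [0, M]\<close> is forward
  invariant, and the theorem takes \<open>M = y\<^sub>0\<close> or \<open>M = \<alpha> / \<mu>\<close>.\<close>

lemma saturation_bounds:
  fixes a x :: real
  assumes "0 \<le> a" "a \<le> 1" "0 \<le> x"
  shows "0 \<le> a * x / (1 + x)" "a * x / (1 + x) \<le> a" "a * x / (1 + x) \<le> x"
proof -
  show "0 \<le> a * x / (1 + x)" using assms by simp
  show "a * x / (1 + x) \<le> a" using assms by (simp add: divide_simps mult_left_mono)
  have "a * x \<le> x" using assms by (simp add: mult_left_le_one_le)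
  also have "\<dots> \<le> x * (1 + x)" using assms by (simp add: algebra_simps)
  finally show "a * x / (1 + x) \<le> x" using assms by (simp add: divide_simps mult.commute)
qed

lemma step_map_mem_strip:
  fixes \<alpha> \<beta> \<mu> M :: real
  assumes "0 \<le> \<alpha>" "\<alpha> \<le> 1" "0 \<le> \<beta>" "\<mu> \<le> 1" "\<alpha> \<le> \<mu> * M"
    and "p \<in> {0..} \<times> {0..M}"
  shows "step_map \<alpha> \<beta> \<mu> p \<in> {0..} \<times> {0..M}"
proof -
  obtain x y where p: "p = (x, y)" and "0 \<le> x" "0 \<le> y" "y \<le> M"
    using assms(6) by auto
  note sat = saturation_bounds[OF assms(1,2) \<open>0 \<le> x\<close>]
  have "0 \<le> \<beta> * y" "0 \<le> (1 - \<mu>) * y" "(1 - \<mu>) * y \<le> (1 - \<mu>) * M"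
    using assms \<open>0 \<le> y\<close> \<open>y \<le> M\<close> by (simp_all add: mult_left_mono)
  then show ?thesis
    using p sat assms(5) by (simp add: step_map_def algebra_simps)
qed

lemma orbit_mem_strip:
  fixes \<alpha> \<beta> \<mu> x0 y0 M :: real
  assumes "0 \<le> \<alpha>" "\<alpha> \<le> 1" "0 \<le> \<beta>" "\<mu> \<le> 1" "\<alpha> \<le> \<mu> * M"
    and "0 \<le> x0" "0 \<le> y0" "y0 \<le> M"
  shows "orbit \<alpha> \<beta> \<mu> x0 y0 n \<in> {0..} \<times> {0..M}"
  by (induction n) (use assms in \<open>simp_all add: step_map_mem_strip\<close>)

theorem lemma1:
  fixes \<alpha> \<beta> \<mu> x0 y0 :: real and n :: nat
  assumes "0 < \<alpha>" "\<alpha> \<le> 1" "0 < \<beta>" "0 < \<mu>" "\<mu> \<le> 1"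
    and "0 \<le> x0" "0 \<le> y0"
  shows "(y0 > \<alpha> / \<mu> \<longrightarrow> 0 \<le> snd (orbit \<alpha> \<beta> \<mu> x0 y0 n) \<and> snd (orbit \<alpha> \<beta> \<mu> x0 y0 n) \<le> y0)
       \<and> (y0 < \<alpha> / \<mu> \<longrightarrow> 0 \<le> snd (orbit \<alpha> \<beta> \<mu> x0 y0 n) \<and> snd (orbit \<alpha> \<beta> \<mu> x0 y0 n) \<le> \<alpha> / \<mu>)"
proof -
  have y_bounds: "0 \<le> snd (orbit \<alpha> \<beta> \<mu> x0 y0 n) \<and> snd (orbit \<alpha> \<beta> \<mu> x0 y0 n) \<le> M"
    if "\<alpha> \<le> \<mu> * M" "y0 \<le> M" for M
    using orbit_mem_strip[OF _ assms(2) _ assms(5) that(1) assms(6,7) that(2)] assms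
    by (auto simp: mem_Times_iff)
  have "\<alpha> \<le> \<mu> * y0" if "y0 > \<alpha> / \<mu>"
    using that assms(4) by (simp add: divide_simps mult.commute)
  moreover have "\<alpha> \<le> \<mu> * (\<alpha> / \<mu>)"
    using assms(4) by simp
  ultimately show ?thesis
    using y_bounds[of y0] y_bounds[of "\<alpha> / \<mu>"] by auto
qed

end
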